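(* Let $f=(f_1,\dots,f_m):\mathbb{R}^n\times\mathbb{R}^m\to\mathbb{R}^m$ be continuous, $R\subset\mathbb{R}^n$ a rectangle, $I=\prod_{i=1}^mI_i$ with compact intervals $I_i$, and $\phi$ a permutation of $\{1,\dots,m\}$. Suppose there are continuous functions $h_i:R\times I_1\times\cdots\times I_{i-1}\to I_i$ ($i=1,\dots,m$) with the following property: for each $i$ and each $(x,y_1,\dots,y_{i-1})\in R\times I_1\times\cdots\times I_{i-1}$, the value $y_i=h_i(x,y_1,\dots,y_{i-1})$ is the unique $y_i\in I_i$ such that $f_{\phi(i)}(x,Y_1,\dots,Y_m)=0$, where $Y_k=y_k$ for $k\le i$ and $Y_k=h_k(x,Y_1,\dots,Y_{k-1})$ for $k=i+1,\dots,m$. Then for every $x\in R$ there is a unique $y\in I$ with $f(x,y)=0$, and the resulting function $g=(g_1,\dots,g_m):R\to I$ is continuous and given by $$g_1(x)=h_1(x),\quad g_2(x)=h_2(x,g_1(x)),\quad\dots,\quad g_m(x)=h_m(x,g_1(x),\dots,g_{m-1}(x)).$$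
   Context: A rectangle in $\mathbb{R}^n$ is a Cartesian product of $n$ compact intervals. (In the paper, such $h_i$ arise from Assumption 2: for each $i$, the map $y_i\mapsto\operatorname{sign}f_{\phi(i)}(x,Y_1,\dots,Y_m)$ has exactly one jump discontinuity on $I_i$, where $\operatorname{sign}(t)=1$ for $t\ge0$ and $-1$ otherwise.) *)

theory Defs
  imports "HOL-Analysis.Analysis"
begin

(* Conventions: coordinates of R^m are indexed 0..m-1 (paper's index i+1 is our i).
   A point y of R^m is represented as y :: nat => real that is zero at indices >= m;
   nat => real carries the product topology (HOL-Analysis Function_Topology).
   A point (y_1,...,y_{i-1}) of I_1 x ... x I_{i-1} is a function zero at indices >= i. *)

definition boxI :: "(nat \<Rightarrow> real) \<Rightarrow> (nat \<Rightarrow> real) \<Rightarrow> nat \<Rightarrow> (nat \<Rightarrow> real) set" where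
  "boxI lo hi i = {y. (\<forall>k<i. y k \<in> {lo k..hi k}) \<and> (\<forall>k\<ge>i. y k = 0)}"

definition zeroext :: "nat \<Rightarrow> (nat \<Rightarrow> real) set" where
  "zeroext m = {y. \<forall>k\<ge>m. y k = 0}"

(* completion Y of (y_0,...,y_i): after k steps, coordinates < k are filled, rest 0.
   Y k = y k for k <= i, Y k = h k x (Y_0..Y_{k-1}) for k > i. *)
primrec complete ::
  "(nat \<Rightarrow> 'a \<Rightarrow> (nat \<Rightarrow> real) \<Rightarrow> real) \<Rightarrow> nat \<Rightarrow> 'a \<Rightarrow> (nat \<Rightarrow> real) \<Rightarrow> nat \<Rightarrow> (nat \<Rightarrow> real)" where
  "complete h i x y 0 = (\<lambda>k. 0)"
| "complete h i x y (Suc k) =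
     (complete h i x y k)(k := (if k \<le> i then y k else h k x (complete h i x y k)))"

end

theory Submission
  imports Defs
begin

text \<open>Solving the triangular system forward, \<open>g\<^sub>i = h\<^sub>i(x, g\<^sub>1, \<dots>, g\<^sub>i\<^sub>-\<^sub>1)\<close>, gives a
  candidate that is continuous as a composition of continuous maps. It is a zero of every \<open>f\<^sub>\<phi>\<^sub>(\<^sub>i\<^sub>)\<close> because completing its first \<open>i\<close>
  coordinates by the \<open>h\<^sub>k\<close> reproduces it. Conversely, if \<open>y\<close> is any zero, then by
  downward induction on \<open>i\<close> the coordinates after \<open>i\<close> already obey the recursion, so \<open>y\<close>
  is the completion of its first \<open>i\<close> coordinates and the uniqueness hypothesis for \<open>h\<^sub>i\<close>
  forces \<open>y\<^sub>i = h\<^sub>i(x, y\<^sub>1, \<dots>, y\<^sub>i\<^sub>-\<^sub>1)\<close>. Hence every zero obeys the recursion, which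
  determines it.\<close>

definition trunc_coords :: "nat \<Rightarrow> (nat \<Rightarrow> real) \<Rightarrow> (nat \<Rightarrow> real)" where
  "trunc_coords n y = (\<lambda>k. if k < n then y k else 0)"

primrec triangular_solution ::
  "(nat \<Rightarrow> 'a \<Rightarrow> (nat \<Rightarrow> real) \<Rightarrow> real) \<Rightarrow> 'a \<Rightarrow> nat \<Rightarrow> (nat \<Rightarrow> real)" where
  "triangular_solution h x 0 = (\<lambda>k. 0)"
| "triangular_solution h x (Suc n) =
     (triangular_solution h x n)(n := h n x (triangular_solution h x n))"

lemma triangular_solution_apply:
  "triangular_solution h x n k = (if k < n then h k x (triangular_solution h x k) else 0)"
  by (induction n) auto

lemma triangular_solution_trunc:
  "i \<le> n \<Longrightarrow> triangular_solution h x i = trunc_coords i (triangular_solution h x n)"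
  by (auto simp: triangular_solution_apply trunc_coords_def)

lemma triangular_solution_recursion:
  assumes "i < n"
  shows "triangular_solution h x n i = h i x (trunc_coords i (triangular_solution h x n))"
proof -
  have "triangular_solution h x i = trunc_coords i (triangular_solution h x n)"
    by (rule triangular_solution_trunc) (use assms in simp)
  then show ?thesis
    using assms by (simp add: triangular_solution_apply[of h x n i])
qed

lemma triangular_solution_unique:
  assumes "\<forall>k<n. y k = h k x (trunc_coords k y)"
  shows "triangular_solution h x n = trunc_coords n y"
  using assms
proof (induction n)
  case (Suc n)
  then have IH: "triangular_solution h x n = trunc_coords n y" by simp
  show ?case
    using Suc.prems by (simp add: IH) (auto simp: trunc_coords_def fun_eq_iff)
qed (simp add: trunc_coords_def)

lemma complete_eq_trunc_coords:
  assumes "\<forall>k\<le>i. Y k = y k"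
    and "\<forall>k. i < k \<and> k < m \<longrightarrow> y k = h k x (trunc_coords k y)"
    and "n \<le> m"
  shows "complete h i x Y n = trunc_coords n y"
  using assms(3)
proof (induction n)
  case (Suc n)
  then have IH: "complete h i x Y n = trunc_coords n y" by simp
  show ?case
  proof (cases "n \<le> i")
    case True
    then show ?thesis using IH assms(1) by (auto simp: trunc_coords_def)
  next
    case False
    then have "y n = h n x (trunc_coords n y)" using assms(2) Suc.prems by auto
    then show ?thesis using False IH by (auto simp: trunc_coords_def)
  qed
qed (simp add: trunc_coords_def)

lemma complete_triangular_solution:
  assumes "i < n"
  shows "complete h i x ((triangular_solution h x i)(i := h i x (triangular_solution h x i))) n =
    triangular_solution h x n"
proof -
  have "(triangular_solution h x i)(i := h i x (triangular_solution h x i)) =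
    trunc_coords (Suc i) (triangular_solution h x n)"
    using triangular_solution_trunc[of "Suc i" n h x] assms by simp
  then have "complete h i x ((triangular_solution h x i)(i := h i x (triangular_solution h x i))) n =
    trunc_coords n (triangular_solution h x n)"
    by (intro complete_eq_trunc_coords[where m = n])
      (auto simp: triangular_solution_recursion trunc_coords_def)
  also have "\<dots> = triangular_solution h x n"
    by (rule triangular_solution_trunc[symmetric]) simp
  finally show ?thesis .
qed

lemma triangular_solution_in_boxI:
  assumes "\<forall>i<m. \<forall>y\<in>boxI lo hi i. h i x y \<in> {lo i..hi i}" and "n \<le> m"
  shows "triangular_solution h x n \<in> boxI lo hi n"
  using assms(2)
proof (induction n)
  case (Suc n)
  then have "triangular_solution h x n \<in> boxI lo hi n" by simp
  moreover have "h n x (triangular_solution h x n) \<in> {lo n..hi n}"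
    using assms(1) Suc.prems calculation by auto
  ultimately show ?case by (auto simp: boxI_def less_Suc_eq)
qed (simp add: boxI_def)

lemma continuous_on_triangular_solution:
  assumes h_cont: "\<forall>i<m. continuous_on (S \<times> boxI lo hi i) (\<lambda>(x, y). h i x y)"
    and h_range: "\<forall>i<m. \<forall>x\<in>S. \<forall>y\<in>boxI lo hi i. h i x y \<in> {lo i..hi i}"
    and "n \<le> m"
  shows "continuous_on S (\<lambda>x. triangular_solution h x n)"
  using assms(3)
proof (induction n)
  case (Suc n)
  then have prev: "continuous_on S (\<lambda>x. triangular_solution h x n)" by simp
  have "continuous_on S (\<lambda>x. (\<lambda>(x, y). h n x y) (x, triangular_solution h x n))"
  proof (rule continuous_on_compose2[OF h_cont[rule_format, of n]])
    show "continuous_on S (\<lambda>x. (x, triangular_solution h x n))"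
      by (intro continuous_on_Pair continuous_on_id prev)
    have "triangular_solution h x n \<in> boxI lo hi n" if "x \<in> S" for x
      using triangular_solution_in_boxI[of m lo hi h x n] h_range that Suc.prems by auto
    then show "(\<lambda>x. (x, triangular_solution h x n)) ` S \<subseteq> S \<times> boxI lo hi n"
      by auto
  qed (use Suc.prems in simp)
  then have new: "continuous_on S (\<lambda>x. h n x (triangular_solution h x n))" by simp
  show ?case
  proof (rule continuous_on_coordinatewise_then_product)
    fix k
    show "continuous_on S (\<lambda>x. triangular_solution h x (Suc n) k)"
    proof (cases "k = n")
      case False
      then have "(\<lambda>x. triangular_solution h x (Suc n) k) = (\<lambda>x. triangular_solution h x n k)"
        by simp
      then show ?thesis
        using continuous_on_product_then_coordinatewise[OF prev, of k] by (simp only:)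
    qed (use new in simp)
  qed
qed simp

lemma zero_satisfies_triangular_recursion:
  assumes h_unique: "\<forall>i<m. \<forall>y\<in>boxI lo hi i. \<forall>t\<in>{lo i..hi i}.
                       f i x (complete h i x (y(i := t)) m) = 0 \<longleftrightarrow> t = h i x y"
    and y: "y \<in> boxI lo hi m" and zero: "\<forall>i<m. f i x y = 0"
  shows "\<forall>k<m. y k = h k x (trunc_coords k y)"
proof -
  have y_trunc: "trunc_coords m y = y"
    using y by (auto simp: boxI_def trunc_coords_def)
  have "\<forall>k. i \<le> k \<and> k < m \<longrightarrow> y k = h k x (trunc_coords k y)" if "i \<le> m" for i
    using that
  proof (induction i rule: inc_induct)
    case (step i)
    then have later: "\<forall>k. i < k \<and> k < m \<longrightarrow> y k = h k x (trunc_coords k y)" by auto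
    have "complete h i x ((trunc_coords i y)(i := y i)) m = y"
      using complete_eq_trunc_coords[of i _ y m h x m, OF _ later] y_trunc
      by (simp add: trunc_coords_def)
    moreover have "trunc_coords i y \<in> boxI lo hi i" "y i \<in> {lo i..hi i}"
      using y step.hyps by (auto simp: boxI_def trunc_coords_def)
    ultimately have "y i = h i x (trunc_coords i y)"
      using h_unique[rule_format, of i "trunc_coords i y" "y i"] zero step.hyps by auto
    with later show ?case by (metis le_eq_less_or_eq)
  qed simp
  then show ?thesis by auto
qed

lemma zero_eq_triangular_solution:
  assumes h_unique: "\<forall>i<m. \<forall>y\<in>boxI lo hi i. \<forall>t\<in>{lo i..hi i}.
                       f i x (complete h i x (y(i := t)) m) = 0 \<longleftrightarrow> t = h i x y"
    and y: "y \<in> boxI lo hi m" and zero: "\<forall>i<m. f i x y = 0"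
  shows "y = triangular_solution h x m"
proof -
  have "triangular_solution h x m = trunc_coords m y"
    using zero_satisfies_triangular_recursion[where f = f and h = h and x = x, OF h_unique y zero]
    by (rule triangular_solution_unique)
  also have "\<dots> = y"
    using y by (auto simp: boxI_def trunc_coords_def)
  finally show ?thesis by simp
qed

lemma triangular_solution_is_zero:
  assumes h_range: "\<forall>i<m. \<forall>y\<in>boxI lo hi i. h i x y \<in> {lo i..hi i}"
    and h_unique: "\<forall>i<m. \<forall>y\<in>boxI lo hi i. \<forall>t\<in>{lo i..hi i}.
                     f i x (complete h i x (y(i := t)) m) = 0 \<longleftrightarrow> t = h i x y"
    and i: "i < m"
  shows "f i x (triangular_solution h x m) = 0"
proof -
  have "triangular_solution h x i \<in> boxI lo hi i"
    using triangular_solution_in_boxI[where h = h and x = x, OF h_range] i by simp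
  moreover from this have "h i x (triangular_solution h x i) \<in> {lo i..hi i}"
    using h_range i by simp
  ultimately have "f i x
      (complete h i x ((triangular_solution h x i)(i := h i x (triangular_solution h x i))) m) = 0"
    using h_unique i by simp
  then show ?thesis
    using complete_triangular_solution[OF i, of h x] by simp
qed

theorem lemma5p1:
  fixes f :: "nat \<Rightarrow> 'a::euclidean_space \<Rightarrow> (nat \<Rightarrow> real) \<Rightarrow> real"
    and h :: "nat \<Rightarrow> 'a \<Rightarrow> (nat \<Rightarrow> real) \<Rightarrow> real"
    and a b :: 'a and lo hi :: "nat \<Rightarrow> real" and m :: nat and phi :: "nat \<Rightarrow> nat"
  assumes f_cont: "\<forall>j<m. continuous_on (UNIV \<times> zeroext m) (\<lambda>(x, y). f j x y)"
    and phi: "bij_betw phi {..<m} {..<m}"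
    and h_cont: "\<forall>i<m. continuous_on (cbox a b \<times> boxI lo hi i) (\<lambda>(x, y). h i x y)"
    and h_range: "\<forall>i<m. \<forall>x\<in>cbox a b. \<forall>y\<in>boxI lo hi i. h i x y \<in> {lo i..hi i}"
    and h_unique: "\<forall>i<m. \<forall>x\<in>cbox a b. \<forall>y\<in>boxI lo hi i. \<forall>t\<in>{lo i..hi i}.
                     f (phi i) x (complete h i x (y(i := t)) m) = 0 \<longleftrightarrow> t = h i x y"
  shows "\<exists>g. continuous_on (cbox a b) g \<and>
           (\<forall>x\<in>cbox a b. g x \<in> boxI lo hi m \<and> (\<forall>j<m. f j x (g x) = 0) \<and>
              (\<forall>y\<in>boxI lo hi m. (\<forall>j<m. f j x y = 0) \<longrightarrow> y = g x) \<and>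
              (\<forall>i<m. g x i = h i x (\<lambda>k. if k < i then g x k else 0)))"
proof (intro exI[of _ "\<lambda>x. triangular_solution h x m"] conjI ballI allI impI)
  show "continuous_on (cbox a b) (\<lambda>x. triangular_solution h x m)"
    using continuous_on_triangular_solution[OF h_cont h_range] by simp
next
  fix x assume x: "x \<in> cbox a b"
  have range_x: "\<forall>i<m. \<forall>y\<in>boxI lo hi i. h i x y \<in> {lo i..hi i}"
    using h_range x by simp
  have unique_x: "\<forall>i<m. \<forall>y\<in>boxI lo hi i. \<forall>t\<in>{lo i..hi i}.
      f (phi i) x (complete h i x (y(i := t)) m) = 0 \<longleftrightarrow> t = h i x y"
    using h_unique x by simp
  show "triangular_solution h x m \<in> boxI lo hi m"
    using triangular_solution_in_boxI[where h = h and x = x, OF range_x] by simp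
  show "triangular_solution h x m i = h i x (\<lambda>k. if k < i then triangular_solution h x m k else 0)"
    if "i < m" for i
    using triangular_solution_recursion[OF that] by (simp add: trunc_coords_def)
  show "f j x (triangular_solution h x m) = 0" if "j < m" for j
  proof -
    obtain i where "i < m" "phi i = j"
      using phi \<open>j < m\<close> by (metis bij_betw_iff_bijections lessThan_iff)
    then show ?thesis
      using triangular_solution_is_zero[where f = "\<lambda>i. f (phi i)" and h = h and x = x,
          OF range_x unique_x]
      by blast
  qed
  show "y = triangular_solution h x m"
    if "y \<in> boxI lo hi m" and "\<forall>j<m. f j x y = 0" for y
    using zero_eq_triangular_solution[where f = "\<lambda>i. f (phi i)" and h = h and x = x,
        OF unique_x that(1)] that(2) phi
    by (metis bij_betw_apply lessThan_iff)
qed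

end
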